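(* Let $G$ be a topological groupoid and $f\colon T\to G^{(0)}$ a continuous map. (a) If $G$ is proper, then $G[T]$ is proper. (b) If $G[T]$ is proper and $f$ is open and surjective, then $G$ is proper.
   Context: $G[T]=\{(t',t,g)\in(T\times T)\times G: g\in G^{f(t')}_{f(t)}\}$, a subgroupoid of the product of the pair groupoid $T\times T$ (product $(x,y)(y,z)=(x,z)$) with $G$, with the subspace topology; its unit space is $T$. A continuous map is proper if it is closed and has quasi-compact fibres (quasi-compact: every open cover has a finite subcover). A topological groupoid $H$ is proper if $(r,s)\colon H\to H^{(0)}\times H^{(0)}$ is proper. *)

theory Defs
  imports "HOL-Analysis.Analysis"
begin

text \<open>A topological groupoid: arrow space X (arrows G = topspace X), unit space U
 (units G0 = topspace U), range r, source s, unit map e, multiplication m on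
 composable pairs (s g = r h), inverse i.  The unit map e is continuous with
 continuous left inverse r, so G0 is identified with a subspace of G.\<close>

definition topological_groupoid ::
  "'a topology \<Rightarrow> 'u topology \<Rightarrow> ('a \<Rightarrow> 'u) \<Rightarrow> ('a \<Rightarrow> 'u) \<Rightarrow> ('u \<Rightarrow> 'a)
   \<Rightarrow> ('a \<Rightarrow> 'a \<Rightarrow> 'a) \<Rightarrow> ('a \<Rightarrow> 'a) \<Rightarrow> bool" where
  "topological_groupoid X U r s e m i \<longleftrightarrow>
     (\<forall>g\<in>topspace X. r g \<in> topspace U \<and> s g \<in> topspace U) \<and>
     (\<forall>x\<in>topspace U. e x \<in> topspace X \<and> r (e x) = x \<and> s (e x) = x) \<and>
     (\<forall>g\<in>topspace X. \<forall>h\<in>topspace X. s g = r h \<longrightarrow>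
        m g h \<in> topspace X \<and> r (m g h) = r g \<and> s (m g h) = s h) \<and>
     (\<forall>g\<in>topspace X. \<forall>h\<in>topspace X. \<forall>k\<in>topspace X. s g = r h \<and> s h = r k \<longrightarrow>
        m (m g h) k = m g (m h k)) \<and>
     (\<forall>g\<in>topspace X. m (e (r g)) g = g \<and> m g (e (s g)) = g) \<and>
     (\<forall>g\<in>topspace X. i g \<in> topspace X \<and> r (i g) = s g \<and> s (i g) = r g \<and>
        m g (i g) = e (r g) \<and> m (i g) g = e (s g)) \<and>
     continuous_map X U r \<and> continuous_map X U s \<and> continuous_map U X e \<and>
     continuous_map X X i \<and>
     continuous_map
       (subtopology (prod_topology X X)
          {(g, h). g \<in> topspace X \<and> h \<in> topspace X \<and> s g = r h})
       X (\<lambda>(g, h). m g h)"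

text \<open>A topological groupoid is proper if (r,s) : H \<rightarrow> H0 \<times> H0 is a proper map
 (closed with quasi-compact fibres; this is the library's proper_map / compactin).\<close>

definition proper_groupoid ::
  "'a topology \<Rightarrow> 'u topology \<Rightarrow> ('a \<Rightarrow> 'u) \<Rightarrow> ('a \<Rightarrow> 'u) \<Rightarrow> bool" where
  "proper_groupoid X U r s \<longleftrightarrow> proper_map X (prod_topology U U) (\<lambda>g. (r g, s g))"

definition pullback_arrows ::
  "'t topology \<Rightarrow> 'a topology \<Rightarrow> ('a \<Rightarrow> 'u) \<Rightarrow> ('a \<Rightarrow> 'u) \<Rightarrow> ('t \<Rightarrow> 'u)
   \<Rightarrow> (('t \<times> 't) \<times> 'a) set" where
  "pullback_arrows T X r s f =
     {((t', t), g). t' \<in> topspace T \<and> t \<in> topspace T \<and> g \<in> topspace X \<and>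
                    r g = f t' \<and> s g = f t}"

definition pullback_topology ::
  "'t topology \<Rightarrow> 'a topology \<Rightarrow> ('a \<Rightarrow> 'u) \<Rightarrow> ('a \<Rightarrow> 'u) \<Rightarrow> ('t \<Rightarrow> 'u)
   \<Rightarrow> (('t \<times> 't) \<times> 'a) topology" where
  "pullback_topology T X r s f =
     subtopology (prod_topology (prod_topology T T) X) (pullback_arrows T X r s f)"

definition pullback_range :: "(('t \<times> 't) \<times> 'a) \<Rightarrow> 't" where
  "pullback_range p = fst (fst p)"

definition pullback_source :: "(('t \<times> 't) \<times> 'a) \<Rightarrow> 't" where
  "pullback_source p = snd (fst p)"

end

theory Submission
  imports Defs
begin

text \<open>The groupoid \<open>G[T]\<close> is the fibre product of \<open>(r,s) : G \<rightarrow> G\<^sup>0 \<times> G\<^sup>0\<close> and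
  \<open>f \<times> f : T \<times> T \<rightarrow> G\<^sup>0 \<times> G\<^sup>0\<close>, and its map \<open>(r,s)\<close> is the projection onto \<open>T \<times> T\<close>.
  So (a) is the stability of proper maps under base change, and (b) says that properness
  descends along the open surjection \<open>f \<times> f\<close>: the image of a closed set \<open>C \<subseteq> G\<close> is the
  complement of the \<open>f \<times> f\<close>-image of the open complement of the image of its preimage in
  \<open>G[T]\<close>, and each fibre of \<open>(r,s)\<close> is the image of a compact fibre of \<open>G[T]\<close> under the
  continuous projection to \<open>G\<close>. None of the algebraic structure of \<open>G\<close> is needed.\<close>

lemma open_map_prod:
  assumes f: "open_map X X' f" and g: "open_map Y Y' g"
  shows "open_map (prod_topology X Y) (prod_topology X' Y') (\<lambda>(x, y). (f x, g y))"
  unfolding open_map_def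
proof (intro allI impI)
  fix S assume S: "openin (prod_topology X Y) S"
  show "openin (prod_topology X' Y') ((\<lambda>(x, y). (f x, g y)) ` S)"
    unfolding openin_prod_topology_alt
  proof (intro allI impI)
    fix a b assume "(a, b) \<in> (\<lambda>(x, y). (f x, g y)) ` S"
    then obtain x y where xy: "(x, y) \<in> S" "a = f x" "b = g y"
      by auto
    then obtain V W where VW: "openin X V" "openin Y W" "x \<in> V" "y \<in> W" "V \<times> W \<subseteq> S"
      using S unfolding openin_prod_topology_alt by meson
    show "\<exists>V' W'. openin X' V' \<and> openin Y' W' \<and> a \<in> V' \<and> b \<in> W' \<and>
                  V' \<times> W' \<subseteq> (\<lambda>(x, y). (f x, g y)) ` S"
    proof (intro exI conjI)
      show "openin X' (f ` V)" "openin Y' (g ` W)"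
        using f g VW by (auto simp: open_map_def)
      show "a \<in> f ` V" "b \<in> g ` W"
        using xy VW by auto
      show "f ` V \<times> g ` W \<subseteq> (\<lambda>(x, y). (f x, g y)) ` S"
        using VW(5) by force
    qed
  qed
qed

definition fibre_product_topology ::
  "'z topology \<Rightarrow> 'x topology \<Rightarrow> ('z \<Rightarrow> 'y) \<Rightarrow> ('x \<Rightarrow> 'y) \<Rightarrow> ('z \<times> 'x) topology" where
  "fibre_product_topology Z X g \<phi> =
     subtopology (prod_topology Z X)
       {(z, x). z \<in> topspace Z \<and> x \<in> topspace X \<and> g z = \<phi> x}"

lemma topspace_fibre_product_topology:
  "topspace (fibre_product_topology Z X g \<phi>) =
     {(z, x). z \<in> topspace Z \<and> x \<in> topspace X \<and> g z = \<phi> x}"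
  by (auto simp: fibre_product_topology_def)

lemma proper_map_fst_fibre_product:
  assumes \<phi>: "proper_map X Y \<phi>" and g: "continuous_map Z Y g"
  shows "proper_map (fibre_product_topology Z X g \<phi>) Z fst"
proof -
  let ?graph = "subtopology (prod_topology Z Y) ((\<lambda>z. (z, g z)) ` topspace Z)"
  have "proper_map (prod_topology Z X) (prod_topology Z Y) (\<lambda>(z, x). (z, \<phi> x))"
    using \<phi> proper_map_prod[of Z X Z Y id \<phi>] by simp
  then have "proper_map (fibre_product_topology Z X g \<phi>) ?graph (\<lambda>(z, x). (z, \<phi> x))"
    unfolding fibre_product_topology_def by (rule proper_map_restriction) auto
  moreover have "proper_map ?graph Z fst"
    using g homeomorphic_maps_graph[of Z Y g]
    by (metis homeomorphic_imp_proper_map homeomorphic_map_maps homeomorphic_maps_sym)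
  ultimately have "proper_map (fibre_product_topology Z X g \<phi>) Z (fst \<circ> (\<lambda>(z, x). (z, \<phi> x)))"
    by (rule proper_map_compose)
  then show ?thesis
    by (simp add: comp_def case_prod_beta')
qed

lemma proper_map_descends_along_open_surjection:
  assumes proper: "proper_map (fibre_product_topology Z X g \<phi>) Z fst"
    and open_g: "open_map Z Y g" and onto_g: "g ` topspace Z = topspace Y"
    and \<phi>: "\<phi> ` topspace X \<subseteq> topspace Y"
  shows "proper_map X Y \<phi>"
  unfolding proper_map_def
proof (intro conjI allI impI ballI)
  let ?P = "fibre_product_topology Z X g \<phi>"
  have snd: "continuous_map ?P X snd"
    unfolding fibre_product_topology_def by (rule continuous_map_subtopology_snd)
  show "closed_map X Y \<phi>"
    unfolding closed_map_def
  proof (intro allI impI)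
    fix C assume C: "closedin X C"
    have "closedin ?P {p \<in> topspace ?P. snd p \<in> C}"
      using closedin_continuous_map_preimage[OF snd C] .
    then have "closedin Z (fst ` {p \<in> topspace ?P. snd p \<in> C})"
      using proper by (simp add: proper_map_def closed_map_def)
    moreover have "fst ` {p \<in> topspace ?P. snd p \<in> C} = {z \<in> topspace Z. g z \<in> \<phi> ` C}"
      using closedin_subset[OF C] by (force simp: topspace_fibre_product_topology)
    ultimately have "openin Z (topspace Z - {z \<in> topspace Z. g z \<in> \<phi> ` C})"
      by (simp add: closedin_def)
    moreover have "topspace Z - {z \<in> topspace Z. g z \<in> \<phi> ` C} = {z \<in> topspace Z. g z \<notin> \<phi> ` C}"
      by blast
    ultimately have "openin Y (g ` {z \<in> topspace Z. g z \<notin> \<phi> ` C})"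
      using open_g by (simp add: open_map_def)
    moreover have "g ` {z \<in> topspace Z. g z \<notin> \<phi> ` C} = topspace Y - \<phi> ` C"
      using onto_g by auto
    moreover have "\<phi> ` C \<subseteq> topspace Y"
      using \<phi> closedin_subset[OF C] by blast
    ultimately show "closedin Y (\<phi> ` C)"
      by (simp add: closedin_def double_diff)
  qed
  fix y assume "y \<in> topspace Y"
  then obtain z where z: "z \<in> topspace Z" "g z = y"
    using onto_g by (metis imageE)
  have "compactin ?P {p \<in> topspace ?P. fst p = z}"
    using proper z by (simp add: proper_map_def)
  then have "compactin X (snd ` {p \<in> topspace ?P. fst p = z})"
    using image_compactin snd by blast
  moreover have "snd ` {p \<in> topspace ?P. fst p = z} = {x \<in> topspace X. \<phi> x = y}"
    using z by (force simp: topspace_fibre_product_topology)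
  ultimately show "compactin X {x \<in> topspace X. \<phi> x = y}"
    by simp
qed

lemma pullback_topology_eq_fibre_product:
  "pullback_topology T X r s f =
     fibre_product_topology (prod_topology T T) X (\<lambda>(t', t). (f t', f t)) (\<lambda>x. (r x, s x))"
  unfolding pullback_topology_def fibre_product_topology_def pullback_arrows_def
  by (rule arg_cong[where f = "subtopology _"]) auto

lemma pullback_range_source_eq_fst:
  "(\<lambda>p. (pullback_range p, pullback_source p)) = fst"
  by (simp add: pullback_range_def pullback_source_def)

theorem proposition2p22:
  fixes X :: "'a topology" and U :: "'u topology" and T :: "'t topology"
    and r s :: "'a \<Rightarrow> 'u" and e :: "'u \<Rightarrow> 'a"
    and m :: "'a \<Rightarrow> 'a \<Rightarrow> 'a" and i :: "'a \<Rightarrow> 'a" and f :: "'t \<Rightarrow> 'u"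
  assumes "topological_groupoid X U r s e m i"
    and "continuous_map T U f"
  shows "(proper_groupoid X U r s \<longrightarrow>
            proper_groupoid (pullback_topology T X r s f) T pullback_range pullback_source)
       \<and> (proper_groupoid (pullback_topology T X r s f) T pullback_range pullback_source
            \<and> open_map T U f \<and> f ` topspace T = topspace U
            \<longrightarrow> proper_groupoid X U r s)"
proof (intro conjI impI)
  have "continuous_map (prod_topology T T) (prod_topology U U) (\<lambda>(t', t). (f t', f t))"
    using assms(2) by (simp add: continuous_map_prod_top)
  then show "proper_groupoid (pullback_topology T X r s f) T pullback_range pullback_source"
    if "proper_groupoid X U r s"
    using that proper_map_fst_fibre_product
    by (simp add: proper_groupoid_def pullback_topology_eq_fibre_product pullback_range_source_eq_fst)
  show "proper_groupoid X U r s"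
    if "proper_groupoid (pullback_topology T X r s f) T pullback_range pullback_source
          \<and> open_map T U f \<and> f ` topspace T = topspace U"
    unfolding proper_groupoid_def
  proof (rule proper_map_descends_along_open_surjection)
    show "proper_map (fibre_product_topology (prod_topology T T) X (\<lambda>(t', t). (f t', f t))
        (\<lambda>x. (r x, s x))) (prod_topology T T) fst"
      using that by (simp add: proper_groupoid_def pullback_range_source_eq_fst
          flip: pullback_topology_eq_fibre_product)
    show "open_map (prod_topology T T) (prod_topology U U) (\<lambda>(t', t). (f t', f t))"
      using that open_map_prod by blast
    show "(\<lambda>(t', t). (f t', f t)) ` topspace (prod_topology T T) = topspace (prod_topology U U)"
      using that by (simp add: image_paired_Times)
    show "(\<lambda>x. (r x, s x)) ` topspace X \<subseteq> topspace (prod_topology U U)"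
      using assms(1) by (auto simp: topological_groupoid_def)
  qed
qed

end
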